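(* Let $K$ be a positive commutative semiring with its natural (pre)order $\leq$, let $A$ be a finite set, and let $\mathbb{X}$ be a $K$-team with domain $V=\{x_1<\dots<x_k\}$ and values in $A$. Let $\pi$ be a $K$-interpretation over $A$ for the $k$-ary symbol $R$ with $\pi(R(\vec a_s))=\mathbb{X}(s)$ for every $s\in\mathrm{As}(V,A)$. Let $\phi$ be a sentence over $\{R\}$. (i) If $\phi\in\mathrm{FO}(=,\neq\!\bot,\leq)$ and $[\![\phi]\!]_\pi\neq 0$ (i.e. $\mathbb{X}$ satisfies the atom defined by $\phi$), then $[\![\phi]\!]_{\chi_K\circ\pi}\neq0$, i.e. the possibilistic collapse $\chi_K\circ\mathbb{X}$ satisfies that atom. (ii) If $\phi\in\mathrm{FO}(\bot?,\neq,\not\leq)$ and $[\![\phi]\!]_{\chi_K\circ\pi}\neq0$, then $[\![\phi]\!]_\pi\neq0$.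
   Context: Commutative semiring $(K,+,\cdot,0,1)$. It is positive if $a+b=0$ implies $a=b=0$, and $ab=0$ implies $a=0$ or $b=0$. The natural order is $a\leq b$ iff $\exists c:\,a+c=b$. $\mathbb{B}$ is the Boolean semiring $(\{0,1\},\vee,\wedge,0,1)$, ordered by $0<1$. $\chi_K\colon K\to\mathbb{B}$ maps $0\mapsto0$ and nonzero elements to $1$. $K$-teams: $\mathrm{As}(V,A)$ is the set of assignments $s\colon V\to A$. A $K$-team is a function $\mathbb{X}\colon\mathrm{As}(V,A)\to K$. For a fixed total order $x_1<\dots<x_k$ of $V$, $\vec a_s=(s(x_1),\dots,s(x_k))$. The possibilistic collapse of $\mathbb{X}$ is the $\mathbb{B}$-team $\chi_K\circ\mathbb{X}$. An atom $\alpha$ is interpreted on $\mathbb{X}$ as $[\![\alpha]\!]_{\mathbb{X}}:=[\![\phi_\alpha]\!]_{\pi_{\mathbb{X}}}$ for a defining sentence $\phi_\alpha$ over $\{R\}$, where $\pi_{\mathbb{X}}$ maps $R(\vec a_s)$ to $\mathbb{X}(s)$. $\mathbb{X}$ satisfies $\alpha$ if this value is nonzero. The atom is $\mathcal L$-definable if $\phi_\alpha\in\mathcal L$. A $K$-interpretation maps facts and negated facts over $A$ to $K$. It is extended to formulae under assignments as follows: - literals get their $\pi$-values; - $x=y$ and $x\neq y$ get $1$ or $0$ according to their truth; - $\wedge$ is product and $\vee$ is sum; - $\forall$ is the product and $\exists$ the sum over $A$; - $\neg$ is evaluated via negation normal form. A formula (in)equality $\phi*\psi$ has value $1$ if $[\![\phi]\!]*[\![\psi]\!]$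 holds in the semiring, and $0$ otherwise. $\bot$ is a formula of constant value $0$. $\mathrm{FO}(=,\neq\!\bot,\leq)$ (resp. $\mathrm{FO}(\bot?,\neq,\not\leq)$) consists of the formulae built from first-order literals and formula (in)equalities of the forms $\phi=\psi$, $\phi\neq\bot$, $\phi\leq\psi$ (resp. $\phi=\bot$, $\phi\neq\psi$, $\phi\not\leq\psi$) between first-order formulae $\phi,\psi$, using $\wedge,\vee,\forall,\exists$ (positive occurrence, no nesting). *)

theory Defs
  imports "HOL-Library.FuncSet"
begin

datatype bsr = B0 | B1

instantiation bsr :: comm_semiring_1
begin
definition zero_bsr_def: "0 = B0"
definition one_bsr_def: "1 = B1"
fun plus_bsr :: "bsr \<Rightarrow> bsr \<Rightarrow> bsr" where
  "plus_bsr B0 y = y" | "plus_bsr B1 y = B1"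
fun times_bsr :: "bsr \<Rightarrow> bsr \<Rightarrow> bsr" where
  "times_bsr B0 y = B0" | "times_bsr B1 y = y"
instance
proof
  fix a b c :: bsr
  show "a + b + c = a + (b + c)" by (cases a; cases b; simp)
  show "a + b = b + a" by (cases a; cases b; simp)
  show "0 + a = a" by (simp add: zero_bsr_def)
  show "a * b * c = a * (b * c)" by (cases a; cases b; simp)
  show "a * b = b * a" by (cases a; cases b; simp)
  show "1 * a = a" by (simp add: one_bsr_def)
  show "0 * a = 0" by (simp add: zero_bsr_def)
  show "a * 0 = 0" by (cases a; simp add: zero_bsr_def)
  show "(a + b) * c = a * c + b * c" by (cases a; cases b; cases c; simp)
  show "(0::bsr) \<noteq> 1" by (simp add: zero_bsr_def one_bsr_def)
qed
end

definition positive_semiring :: "'a::comm_semiring_1 itself \<Rightarrow> bool" where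
  "positive_semiring _ \<longleftrightarrow>
     (\<forall>a b::'a. a + b = 0 \<longrightarrow> a = 0 \<and> b = 0) \<and>
     (\<forall>a b::'a. a * b = 0 \<longrightarrow> a = 0 \<or> b = 0)"

definition nat_le :: "'a::comm_semiring_1 \<Rightarrow> 'a \<Rightarrow> bool" where
  "nat_le a b \<longleftrightarrow> (\<exists>c. a + c = b)"

definition chi :: "'a::comm_semiring_1 \<Rightarrow> bsr" where
  "chi a = (if a = 0 then B0 else B1)"

datatype lit = PosR "nat list" | NegR "nat list" | LEq nat nat | LNeq nat nat

datatype fo = FLit lit | FAnd fo fo | FOr fo fo | FAll nat fo | FEx nat fo | FNot fo

datatype xfo =
    XLit lit
  | XEq fo fo
  | XNeqBot fo
  | XLe fo fo
  | XEqBot fo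
  | XNeq fo fo
  | XNle fo fo
  | XAnd xfo xfo | XOr xfo xfo | XAll nat xfo | XEx nat xfo

fun frag_pos :: "xfo \<Rightarrow> bool" where
  "frag_pos (XLit _) = True"
| "frag_pos (XEq _ _) = True"
| "frag_pos (XNeqBot _) = True"
| "frag_pos (XLe _ _) = True"
| "frag_pos (XEqBot _) = False"
| "frag_pos (XNeq _ _) = False"
| "frag_pos (XNle _ _) = False"
| "frag_pos (XAnd a b) = (frag_pos a \<and> frag_pos b)"
| "frag_pos (XOr a b) = (frag_pos a \<and> frag_pos b)"
| "frag_pos (XAll _ a) = frag_pos a"
| "frag_pos (XEx _ a) = frag_pos a"

text \<open>The fragment FO(bot?, ~=, not<=) (bot? means the form phi = bot).\<close>
fun frag_neg :: "xfo \<Rightarrow> bool" where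
  "frag_neg (XLit _) = True"
| "frag_neg (XEq _ _) = False"
| "frag_neg (XNeqBot _) = False"
| "frag_neg (XLe _ _) = False"
| "frag_neg (XEqBot _) = True"
| "frag_neg (XNeq _ _) = True"
| "frag_neg (XNle _ _) = True"
| "frag_neg (XAnd a b) = (frag_neg a \<and> frag_neg b)"
| "frag_neg (XOr a b) = (frag_neg a \<and> frag_neg b)"
| "frag_neg (XAll _ a) = frag_neg a"
| "frag_neg (XEx _ a) = frag_neg a"

fun fv_lit :: "lit \<Rightarrow> nat set" where
  "fv_lit (PosR xs) = set xs" | "fv_lit (NegR xs) = set xs"
| "fv_lit (LEq x y) = {x, y}" | "fv_lit (LNeq x y) = {x, y}"

fun fv_fo :: "fo \<Rightarrow> nat set" where
  "fv_fo (FLit l) = fv_lit l"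
| "fv_fo (FAnd a b) = fv_fo a \<union> fv_fo b"
| "fv_fo (FOr a b) = fv_fo a \<union> fv_fo b"
| "fv_fo (FAll x a) = fv_fo a - {x}"
| "fv_fo (FEx x a) = fv_fo a - {x}"
| "fv_fo (FNot a) = fv_fo a"

fun fv_x :: "xfo \<Rightarrow> nat set" where
  "fv_x (XLit l) = fv_lit l"
| "fv_x (XEq a b) = fv_fo a \<union> fv_fo b"
| "fv_x (XNeqBot a) = fv_fo a"
| "fv_x (XLe a b) = fv_fo a \<union> fv_fo b"
| "fv_x (XEqBot a) = fv_fo a"
| "fv_x (XNeq a b) = fv_fo a \<union> fv_fo b"
| "fv_x (XNle a b) = fv_fo a \<union> fv_fo b"
| "fv_x (XAnd a b) = fv_x a \<union> fv_x b"
| "fv_x (XOr a b) = fv_x a \<union> fv_x b"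
| "fv_x (XAll x a) = fv_x a - {x}"
| "fv_x (XEx x a) = fv_x a - {x}"

fun ar_lit :: "nat \<Rightarrow> lit \<Rightarrow> bool" where
  "ar_lit k (PosR xs) = (length xs = k)" | "ar_lit k (NegR xs) = (length xs = k)"
| "ar_lit k (LEq _ _) = True" | "ar_lit k (LNeq _ _) = True"

fun ar_fo :: "nat \<Rightarrow> fo \<Rightarrow> bool" where
  "ar_fo k (FLit l) = ar_lit k l"
| "ar_fo k (FAnd a b) = (ar_fo k a \<and> ar_fo k b)"
| "ar_fo k (FOr a b) = (ar_fo k a \<and> ar_fo k b)"
| "ar_fo k (FAll _ a) = ar_fo k a"
| "ar_fo k (FEx _ a) = ar_fo k a"
| "ar_fo k (FNot a) = ar_fo k a"

fun ar_x :: "nat \<Rightarrow> xfo \<Rightarrow> bool" where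
  "ar_x k (XLit l) = ar_lit k l"
| "ar_x k (XEq a b) = (ar_fo k a \<and> ar_fo k b)"
| "ar_x k (XNeqBot a) = ar_fo k a"
| "ar_x k (XLe a b) = (ar_fo k a \<and> ar_fo k b)"
| "ar_x k (XEqBot a) = ar_fo k a"
| "ar_x k (XNeq a b) = (ar_fo k a \<and> ar_fo k b)"
| "ar_x k (XNle a b) = (ar_fo k a \<and> ar_fo k b)"
| "ar_x k (XAnd a b) = (ar_x k a \<and> ar_x k b)"
| "ar_x k (XOr a b) = (ar_x k a \<and> ar_x k b)"
| "ar_x k (XAll _ a) = ar_x k a"
| "ar_x k (XEx _ a) = ar_x k a"

definition sentence :: "nat \<Rightarrow> xfo \<Rightarrow> bool" where
  "sentence k \<phi> \<longleftrightarrow> fv_x \<phi> = {} \<and> ar_x k \<phi>"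

text \<open>A K-interpretation over A: \<open>\<pi> True as\<close> is the value of the fact R(as),
  \<open>\<pi> False as\<close> the value of the negated fact not R(as).\<close>
type_synonym ('u, 'a) interp = "bool \<Rightarrow> 'u list \<Rightarrow> 'a"

text \<open>Literal value under polarity p (p = False means the literal occurs negated).\<close>
fun ev_lit :: "('u, 'a::comm_semiring_1) interp \<Rightarrow> bool \<Rightarrow> lit \<Rightarrow> (nat \<Rightarrow> 'u) \<Rightarrow> 'a" where
  "ev_lit \<pi> p (PosR xs) s = \<pi> p (map s xs)"
| "ev_lit \<pi> p (NegR xs) s = \<pi> (\<not> p) (map s xs)"
| "ev_lit \<pi> p (LEq x y) s = (if (s x = s y) = p then 1 else 0)"
| "ev_lit \<pi> p (LNeq x y) s = (if (s x \<noteq> s y) = p then 1 else 0)"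

text \<open>Evaluation of first-order formulae; negation is pushed inward (NNF) via the
  polarity argument.\<close>
fun ev_fo :: "('u, 'a::comm_semiring_1) interp \<Rightarrow> 'u set \<Rightarrow> bool \<Rightarrow> fo \<Rightarrow> (nat \<Rightarrow> 'u) \<Rightarrow> 'a" where
  "ev_fo \<pi> A p (FLit l) s = ev_lit \<pi> p l s"
| "ev_fo \<pi> A p (FAnd a b) s =
     (if p then ev_fo \<pi> A p a s * ev_fo \<pi> A p b s else ev_fo \<pi> A p a s + ev_fo \<pi> A p b s)"
| "ev_fo \<pi> A p (FOr a b) s =
     (if p then ev_fo \<pi> A p a s + ev_fo \<pi> A p b s else ev_fo \<pi> A p a s * ev_fo \<pi> A p b s)"
| "ev_fo \<pi> A p (FAll x a) s =
     (if p then (\<Prod>d\<in>A. ev_fo \<pi> A p a (s(x := d))) else (\<Sum>d\<in>A. ev_fo \<pi> A p a (s(x := d))))"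
| "ev_fo \<pi> A p (FEx x a) s =
     (if p then (\<Sum>d\<in>A. ev_fo \<pi> A p a (s(x := d))) else (\<Prod>d\<in>A. ev_fo \<pi> A p a (s(x := d))))"
| "ev_fo \<pi> A p (FNot a) s = ev_fo \<pi> A (\<not> p) a s"

abbreviation ind :: "bool \<Rightarrow> 'a::comm_semiring_1" where
  "ind b \<equiv> (if b then 1 else 0)"

fun ev_x :: "('u, 'a::comm_semiring_1) interp \<Rightarrow> 'u set \<Rightarrow> xfo \<Rightarrow> (nat \<Rightarrow> 'u) \<Rightarrow> 'a" where
  "ev_x \<pi> A (XLit l) s = ev_lit \<pi> True l s"
| "ev_x \<pi> A (XEq a b) s = ind (ev_fo \<pi> A True a s = ev_fo \<pi> A True b s)"
| "ev_x \<pi> A (XNeqBot a) s = ind (ev_fo \<pi> A True a s \<noteq> 0)"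
| "ev_x \<pi> A (XLe a b) s = ind (nat_le (ev_fo \<pi> A True a s) (ev_fo \<pi> A True b s))"
| "ev_x \<pi> A (XEqBot a) s = ind (ev_fo \<pi> A True a s = 0)"
| "ev_x \<pi> A (XNeq a b) s = ind (ev_fo \<pi> A True a s \<noteq> ev_fo \<pi> A True b s)"
| "ev_x \<pi> A (XNle a b) s = ind (\<not> nat_le (ev_fo \<pi> A True a s) (ev_fo \<pi> A True b s))"
| "ev_x \<pi> A (XAnd a b) s = ev_x \<pi> A a s * ev_x \<pi> A b s"
| "ev_x \<pi> A (XOr a b) s = ev_x \<pi> A a s + ev_x \<pi> A b s"
| "ev_x \<pi> A (XAll x a) s = (\<Prod>d\<in>A. ev_x \<pi> A a (s(x := d)))"
| "ev_x \<pi> A (XEx x a) s = (\<Sum>d\<in>A. ev_x \<pi> A a (s(x := d)))"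

text \<open>Value of a sentence (the assignment is irrelevant for sentences).\<close>
definition sem :: "('u, 'a::comm_semiring_1) interp \<Rightarrow> 'u set \<Rightarrow> xfo \<Rightarrow> 'a" where
  "sem \<pi> A \<phi> = ev_x \<pi> A \<phi> (\<lambda>_. undefined)"

definition collapse :: "('u, 'a::comm_semiring_1) interp \<Rightarrow> ('u, bsr) interp" where
  "collapse \<pi> = (\<lambda>p t. chi (\<pi> p t))"

definition tuple :: "'v::linorder set \<Rightarrow> ('v \<Rightarrow> 'u) \<Rightarrow> 'u list" where
  "tuple V s = map s (sorted_list_of_set V)"

end

theory Submission
  imports Defs
begin

text \<open>In a positive semiring a finite sum (product) is nonzero iff some (every) term
  is, so for formulae built with \<open>\<and>, \<or>, \<forall>, \<exists>\<close> being nonzero depends only on which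
  atoms are nonzero. The support map \<open>\<chi>\<close> is a zero-reflecting semiring homomorphism
  into the Boolean semiring; it therefore commutes with the semantics of first-order
  formulae, preserves \<open>=\<close> and the natural order, and preserves and reflects \<open>\<noteq> \<bottom>\<close>.
  Hence nonzero atoms \<open>\<phi> = \<psi>\<close>, \<open>\<phi> \<noteq> \<bottom>\<close>, \<open>\<phi> \<le> \<psi>\<close> stay nonzero under \<open>\<chi>\<close>, and
  the dual atoms \<open>\<phi> = \<bottom>\<close>, \<open>\<phi> \<noteq> \<psi>\<close>, \<open>\<phi> \<not>\<le> \<psi>\<close> are nonzero whenever their
  collapses are.\<close>

definition semiring_hom :: "('a::comm_semiring_1 \<Rightarrow> 'b::comm_semiring_1) \<Rightarrow> bool" where
  "semiring_hom h \<longleftrightarrow> h 0 = 0 \<and> h 1 = 1 \<and>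
     (\<forall>a b. h (a + b) = h a + h b) \<and> (\<forall>a b. h (a * b) = h a * h b)"

lemma semiring_hom_sum:
  assumes "semiring_hom h"
  shows "h (sum f A) = (\<Sum>x\<in>A. h (f x))"
proof (cases "finite A")
  case True
  then show ?thesis
    using assms unfolding semiring_hom_def by (induction A rule: finite_induct) simp_all
qed (use assms in \<open>simp add: semiring_hom_def\<close>)

lemma semiring_hom_prod:
  assumes "semiring_hom h"
  shows "h (prod f A) = (\<Prod>x\<in>A. h (f x))"
proof (cases "finite A")
  case True
  then show ?thesis
    using assms unfolding semiring_hom_def by (induction A rule: finite_induct) simp_all
qed (use assms in \<open>simp add: semiring_hom_def\<close>)

lemma semiring_hom_ind:
  "semiring_hom h \<Longrightarrow> h (ind b) = ind b"
  by (simp add: semiring_hom_def)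

lemma semiring_hom_nat_le:
  "semiring_hom h \<Longrightarrow> nat_le a b \<Longrightarrow> nat_le (h a) (h b)"
  unfolding semiring_hom_def nat_le_def by metis

lemma ev_lit_semiring_hom:
  "semiring_hom h \<Longrightarrow> ev_lit (\<lambda>p t. h (\<pi> p t)) p l s = h (ev_lit \<pi> p l s)"
  by (cases l) (simp_all add: semiring_hom_ind)

lemma ev_fo_semiring_hom:
  assumes "semiring_hom h"
  shows "ev_fo (\<lambda>p t. h (\<pi> p t)) A p \<phi> s = h (ev_fo \<pi> A p \<phi> s)"
  by (induction \<phi> arbitrary: p s)
     (use assms in \<open>simp_all add: semiring_hom_def ev_lit_semiring_hom
       semiring_hom_sum semiring_hom_prod\<close>)

lemma positive_semiring_add_eq_0_iff:
  "positive_semiring TYPE('a::comm_semiring_1) \<Longrightarrow> (a + b = (0::'a)) = (a = 0 \<and> b = 0)"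
  unfolding positive_semiring_def by (metis add.right_neutral)

lemma positive_semiring_mult_eq_0_iff:
  "positive_semiring TYPE('a::comm_semiring_1) \<Longrightarrow> (a * b = (0::'a)) = (a = 0 \<or> b = 0)"
  unfolding positive_semiring_def by (metis mult_zero_left mult_zero_right)

lemma positive_semiring_sum_eq_0_iff:
  assumes "positive_semiring TYPE('a::comm_semiring_1)" and "finite A"
  shows "(sum f A = (0::'a)) = (\<forall>x\<in>A. f x = 0)"
  using assms(2) by (induction A rule: finite_induct)
    (simp_all add: positive_semiring_add_eq_0_iff[OF assms(1)])

lemma positive_semiring_prod_eq_0_iff:
  assumes "positive_semiring TYPE('a::comm_semiring_1)" and "finite A"
  shows "(prod f A = (0::'a)) = (\<exists>x\<in>A. f x = 0)"
  using assms(2) by (induction A rule: finite_induct)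
    (simp_all add: positive_semiring_mult_eq_0_iff[OF assms(1)])

lemma positive_semiring_bsr: "positive_semiring TYPE(bsr)"
  unfolding positive_semiring_def zero_bsr_def
  by (intro conjI allI; case_tac a; case_tac b; simp)

lemma chi_eq_0_iff: "(chi a = 0) = (a = 0)"
  by (simp add: chi_def zero_bsr_def)

lemma bsr_eq_chiI: "((x::bsr) = 0 \<longleftrightarrow> a = 0) \<Longrightarrow> x = chi a"
  by (cases x) (auto simp: chi_def zero_bsr_def)

lemma semiring_hom_chi:
  assumes "positive_semiring TYPE('a::comm_semiring_1)"
  shows "semiring_hom (chi :: 'a \<Rightarrow> bsr)"
  unfolding semiring_hom_def
proof (intro conjI allI)
  fix a b :: 'a
  show "chi (a + b) = chi a + chi b"
    by (rule sym, rule bsr_eq_chiI) (simp add: chi_eq_0_iff positive_semiring_add_eq_0_iff[OF assms]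
          positive_semiring_add_eq_0_iff[OF positive_semiring_bsr])
  show "chi (a * b) = chi a * chi b"
    by (rule sym, rule bsr_eq_chiI) (simp add: chi_eq_0_iff positive_semiring_mult_eq_0_iff[OF assms]
          positive_semiring_mult_eq_0_iff[OF positive_semiring_bsr])
qed (simp_all add: chi_def zero_bsr_def one_bsr_def)

context
  fixes h :: "'a::comm_semiring_1 \<Rightarrow> 'b::comm_semiring_1" and A :: "'u set"
  assumes pos_a: "positive_semiring TYPE('a)"
    and pos_b: "positive_semiring TYPE('b)"
    and hom: "semiring_hom h"
    and reflects_0: "\<And>a. h a = 0 \<longleftrightarrow> a = 0"
    and fin: "finite A"
begin

private lemmas nonzero_iff =
  positive_semiring_add_eq_0_iff[OF pos_a] positive_semiring_add_eq_0_iff[OF pos_b]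
  positive_semiring_mult_eq_0_iff[OF pos_a] positive_semiring_mult_eq_0_iff[OF pos_b]
  positive_semiring_sum_eq_0_iff[OF pos_a fin] positive_semiring_sum_eq_0_iff[OF pos_b fin]
  positive_semiring_prod_eq_0_iff[OF pos_a fin] positive_semiring_prod_eq_0_iff[OF pos_b fin]

private lemmas ev_hom =
  ev_lit_semiring_hom[OF hom] ev_fo_semiring_hom[OF hom] reflects_0

lemma ev_x_semiring_hom_frag_pos:
  "frag_pos \<phi> \<Longrightarrow> ev_x \<pi> A \<phi> s \<noteq> 0 \<Longrightarrow> ev_x (\<lambda>p t. h (\<pi> p t)) A \<phi> s \<noteq> 0"
proof (induction \<phi> arbitrary: s)
  case (XLe a b)
  then show ?case by (auto simp: ev_hom semiring_hom_nat_le[OF hom] split: if_splits)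
qed (auto simp: nonzero_iff ev_hom split: if_splits)

lemma ev_x_semiring_hom_frag_neg:
  "frag_neg \<phi> \<Longrightarrow> ev_x (\<lambda>p t. h (\<pi> p t)) A \<phi> s \<noteq> 0 \<Longrightarrow> ev_x \<pi> A \<phi> s \<noteq> 0"
proof (induction \<phi> arbitrary: s)
  case (XNle a b)
  then show ?case by (auto simp: ev_hom semiring_hom_nat_le[OF hom] split: if_splits)
qed (auto simp: nonzero_iff ev_hom split: if_splits)

end

text \<open>The team hypotheses only relate \<open>\<pi>\<close> to \<open>X\<close>: the transfer holds for every
  interpretation and every sentence of the respective fragment.\<close>

theorem mainTheorem5:
  fixes A :: "'u set" and V :: "'v::linorder set"
    and X :: "('v \<Rightarrow> 'u) \<Rightarrow> 'a::comm_semiring_1"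
    and \<pi> :: "('u, 'a) interp" and \<phi> :: xfo
  assumes pos: "positive_semiring TYPE('a)"
    and finA: "finite A"
    and finV: "finite V"
    and team: "\<forall>s \<in> V \<rightarrow>\<^sub>E A. \<pi> True (tuple V s) = X s"
    and sent: "sentence (card V) \<phi>"
  shows "(frag_pos \<phi> \<and> sem \<pi> A \<phi> \<noteq> 0 \<longrightarrow> sem (collapse \<pi>) A \<phi> \<noteq> 0)
       \<and> (frag_neg \<phi> \<and> sem (collapse \<pi>) A \<phi> \<noteq> 0 \<longrightarrow> sem \<pi> A \<phi> \<noteq> 0)"
proof -
  note chi_transfer = pos positive_semiring_bsr semiring_hom_chi[OF pos] chi_eq_0_iff finA
  show ?thesis
    unfolding sem_def collapse_def
    using ev_x_semiring_hom_frag_pos[OF chi_transfer] ev_x_semiring_hom_frag_neg[OF chi_transfer]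
    by blast
qed

end
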